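(* Let $I=(0,1]$ and let $R$ be a cusp characteristic. Then the one-dimensional Riemannian manifold $(I,dr^2/R^2)$ is uniformly regular.
   Context: A cusp characteristic is a function $R\in C^\infty(I,(0,1])$ with $\int_0^1dt/R(t)=\infty$ and $\sup_{t\in I}|R(t)^{j-1}\partial^jR(t)|\le c(j)$ for all $j\ge1$. A Riemannian manifold (possibly with boundary) is uniformly regular iff it has bounded geometry; equivalently it admits an atlas of normalized charts onto $(-1,1)^m$ or $[0,1)\times(-1,1)^{m-1}$ which is shrinkable, of finite multiplicity, has uniformly $C^k$-bounded transition maps, and in which the metric is uniformly equivalent to the Euclidean one with all derivatives uniformly bounded. *)

theory Defs
  imports "HOL-Analysis.Analysis"
begin

definition smooth_on :: "real set \<Rightarrow> (real \<Rightarrow> real) \<Rightarrow> bool" where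
  "smooth_on S f \<longleftrightarrow>
     (\<exists>T h. open T \<and> S \<subseteq> T \<and> (\<forall>x\<in>S. h x = f x) \<and>
            (\<forall>k. \<forall>x\<in>T. (deriv ^^ k) h differentiable (at x)))"

text \<open>Cusp characteristic on I = (0,1].  The derivative bounds are stated on the interior
  (0,1); since R is smooth up to t = 1 this is equivalent to the bound on all of I.\<close>
definition cusp_characteristic :: "(real \<Rightarrow> real) \<Rightarrow> bool" where
  "cusp_characteristic R \<longleftrightarrow>
     smooth_on {0<..1} R \<and>
     (\<forall>t\<in>{0<..1}. 0 < R t \<and> R t \<le> 1) \<and>
     set_nn_integral lborel {0<..1} (\<lambda>t. ennreal (1 / R t)) = \<infinity> \<and>
     (\<forall>j::nat. j \<ge> 1 \<longrightarrow> (\<exists>c. \<forall>t\<in>{0<..<1}. \<bar>R t ^ (j - 1) * (deriv ^^ j) R t\<bar> \<le> c))"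

text \<open>Model sets of dimension one: b = True is a boundary chart, model [0,1);
  b = False an interior chart, model (-1,1).  shrunk_cube r b is the model scaled by r.\<close>
definition std_cube :: "bool \<Rightarrow> real set" where
  "std_cube b = (if b then {0..<1} else {-1<..<1})"

definition shrunk_cube :: "real \<Rightarrow> bool \<Rightarrow> real set" where
  "shrunk_cube r b = (if b then {0..<r} else {-r<..<r})"

text \<open>Manifold boundary of a one-dimensional manifold M that is a real interval.\<close>
definition mbd :: "real set \<Rightarrow> real set" where
  "mbd M = M - interior M"

text \<open>A chart is represented by (b, psi) where psi : std_cube b \<rightarrow> U is the inverse of
  the chart map phi = inv_into (std_cube b) psi, and U = psi ` std_cube b is the chart patch.\<close>
definition patch :: "bool \<times> (real \<Rightarrow> real) \<Rightarrow> real set" where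
  "patch \<kappa> = snd \<kappa> ` std_cube (fst \<kappa>)"

definition normalized_chart :: "real set \<Rightarrow> bool \<times> (real \<Rightarrow> real) \<Rightarrow> bool" where
  "normalized_chart M \<kappa> \<longleftrightarrow>
     (let b = fst \<kappa>; \<psi> = snd \<kappa>; Q = std_cube b; U = \<psi> ` Q in
       openin (top_of_set M) U \<and> inj_on \<psi> Q \<and>
       smooth_on Q \<psi> \<and> smooth_on U (inv_into Q \<psi>) \<and>
       (b \<longleftrightarrow> U \<inter> mbd M \<noteq> {}) \<and>
       (\<forall>x\<in>Q. \<psi> x \<in> mbd M \<longleftrightarrow> b \<and> x = 0))"

text \<open>Sup-norms are taken over interior points of the
  (relatively open) domains, which by continuity of derivatives up to the boundary gives the
  same suprema.\<close>
definition uniformly_regular :: "real set \<Rightarrow> (real \<Rightarrow> real) \<Rightarrow> bool" where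
  "uniformly_regular M G \<longleftrightarrow>
     (\<exists>A :: (bool \<times> (real \<Rightarrow> real)) set.
        (\<forall>\<kappa>\<in>A. normalized_chart M \<kappa>) \<and>
        (\<exists>r. 0 < r \<and> r < 1 \<and> M \<subseteq> (\<Union>\<kappa>\<in>A. snd \<kappa> ` shrunk_cube r (fst \<kappa>))) \<and>
        (\<exists>N::nat. \<forall>x\<in>M. finite {\<kappa>\<in>A. x \<in> patch \<kappa>} \<and> card {\<kappa>\<in>A. x \<in> patch \<kappa>} \<le> N) \<and>
        (\<forall>k::nat. \<exists>C. \<forall>\<kappa>\<in>A. \<forall>\<eta>\<in>A.
           \<forall>x\<in>interior {y\<in>std_cube (fst \<kappa>). snd \<kappa> y \<in> patch \<eta>}.
             \<bar>(deriv ^^ k) (inv_into (std_cube (fst \<eta>)) (snd \<eta>) \<circ> snd \<kappa>) x\<bar> \<le> C) \<and>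
        (\<exists>c\<ge>1. \<forall>\<kappa>\<in>A. \<forall>x\<in>interior (std_cube (fst \<kappa>)).
           1 / c \<le> G (snd \<kappa> x) * (deriv (snd \<kappa>) x)\<^sup>2 \<and>
           G (snd \<kappa> x) * (deriv (snd \<kappa>) x)\<^sup>2 \<le> c) \<and>
        (\<forall>k::nat. \<exists>C. \<forall>\<kappa>\<in>A. \<forall>x\<in>interior (std_cube (fst \<kappa>)).
           \<bar>(deriv ^^ k) (\<lambda>y. G (snd \<kappa> y) * (deriv (snd \<kappa>) y)\<^sup>2) x\<bar> \<le> C))"

end

(* In the arclength coordinate s(r) = \<integral>_r^1 dt/R(t) the metric dr^2/R^2 becomes ds^2.
   Since \<integral>_0^1 dt/R = \<infinity>, s is a diffeomorphism from (0,1] onto [0,\<infinity>), so the charts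
   y \<mapsto> s^-1(k + y) on unit intervals form a normalized atlas with multiplicity two, whose
   transition maps are integer translations and in which the metric is exactly Euclidean.
   Smoothness of s^-1 up to s = 0 uses a positive smooth extension of R beyond r = 1. *)
theory Submission
  imports Defs
begin

definition C_infinity_on :: "real set \<Rightarrow> (real \<Rightarrow> real) \<Rightarrow> bool" where
  "C_infinity_on T f \<longleftrightarrow> (\<forall>k. \<forall>x\<in>T. (deriv ^^ k) f differentiable (at x))"

lemma smooth_on_iff_C_infinity_on:
  "smooth_on S f \<longleftrightarrow> (\<exists>T g. open T \<and> S \<subseteq> T \<and> (\<forall>x\<in>S. g x = f x) \<and> C_infinity_on T g)"
  unfolding smooth_on_def C_infinity_on_def ..

lemma higher_deriv_eq_on_open:
  assumes "open T" "\<forall>x\<in>T. f x = g x" "x \<in> T"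
  shows "(deriv ^^ k) f x = (deriv ^^ k) g x"
  using assms(3)
proof (induction k arbitrary: x)
  case (Suc k)
  have "eventually (\<lambda>y. (deriv ^^ k) f y = (deriv ^^ k) g y) (nhds x)"
    using Suc assms(1) unfolding eventually_nhds by blast
  then show ?case by (simp add: deriv_cong_ev)
qed (use assms(2) in simp)

lemma differentiable_eq_on_open:
  fixes f g :: "real \<Rightarrow> real"
  assumes "open T" "\<forall>x\<in>T. f x = g x" "x \<in> T" "g differentiable (at x)"
  shows "f differentiable (at x)"
proof -
  from assms(4) obtain D where "(g has_field_derivative D) (at x)"
    using real_differentiable_def by blast
  then have "(f has_field_derivative D) (at x)"
    by (rule has_field_derivative_transform_within_open[OF _ assms(1,3)]) (use assms(2) in auto)
  then show ?thesis using real_differentiable_def by blast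
qed

lemma C_infinity_on_coinduct:
  assumes T: "open T"
    and step: "\<And>f. P f \<Longrightarrow> (\<forall>x\<in>T. f differentiable (at x)) \<and> (\<exists>g. P g \<and> (\<forall>x\<in>T. deriv f x = g x))"
    and "P f"
  shows "C_infinity_on T f"
proof -
  have H: "\<exists>g. P g \<and> (\<forall>x\<in>T. (deriv ^^ k) f x = g x)" if "P f" for k f
    using that
  proof (induction k arbitrary: f)
    case (Suc k)
    then obtain g where g: "P g" "\<forall>x\<in>T. deriv f x = g x" using step by blast
    then obtain g' where g': "P g'" "\<forall>x\<in>T. (deriv ^^ k) g x = g' x" using Suc.IH by blast
    have "\<forall>x\<in>T. (deriv ^^ Suc k) f x = g' x"
      using higher_deriv_eq_on_open[OF T g(2)] g'(2) by (simp add: funpow_Suc_right del: funpow.simps)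
    then show ?case using g' by blast
  qed auto
  then show ?thesis
    unfolding C_infinity_on_def
  proof (intro allI ballI)
    fix k x assume x: "x \<in> T"
    obtain g where g: "P g" "\<forall>x\<in>T. (deriv ^^ k) f x = g x" using \<open>P f\<close> H by blast
    then show "(deriv ^^ k) f differentiable (at x)"
      using step x by (blast intro: differentiable_eq_on_open[OF T g(2) x])
  qed
qed

lemma C_infinity_on_imp_differentiable: "C_infinity_on T f \<Longrightarrow> x \<in> T \<Longrightarrow> f differentiable (at x)"
  unfolding C_infinity_on_def by (metis funpow_0)

lemma C_infinity_on_deriv: "C_infinity_on T f \<Longrightarrow> C_infinity_on T (deriv f)"
  unfolding C_infinity_on_def by (metis funpow_Suc_right o_apply)

lemma C_infinity_on_has_field_derivative:
  "C_infinity_on T f \<Longrightarrow> x \<in> T \<Longrightarrow> (f has_field_derivative deriv f x) (at x)"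
  using C_infinity_on_imp_differentiable DERIV_deriv_iff_real_differentiable by blast

lemma C_infinity_on_from_deriv:
  assumes T: "open T" and "\<forall>x\<in>T. (f has_field_derivative g x) (at x)" and "C_infinity_on T g"
  shows "C_infinity_on T f"
proof (rule C_infinity_on_coinduct[where P="\<lambda>u. u = f \<or> C_infinity_on T u", OF T])
  fix u assume "u = f \<or> C_infinity_on T u"
  then show "(\<forall>x\<in>T. u differentiable (at x)) \<and> (\<exists>g. (g = f \<or> C_infinity_on T g) \<and> (\<forall>x\<in>T. deriv u x = g x))"
  proof
    assume "u = f"
    then show ?thesis using assms(2,3) DERIV_imp_deriv real_differentiable_def by blast
  qed (use C_infinity_on_imp_differentiable C_infinity_on_deriv in blast)
qed simp

lemma C_infinity_on_const: "open T \<Longrightarrow> C_infinity_on T (\<lambda>_. c)"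
  by (rule C_infinity_on_coinduct[where P="\<lambda>u. \<exists>c. u = (\<lambda>_. c)"]) auto

text \<open>The class closed under differentiation by the Leibniz rule, i.e. the coinduction
  invariant for products.\<close>
inductive sum_of_products_on :: "real set \<Rightarrow> (real \<Rightarrow> real) \<Rightarrow> bool" for T where
  product: "C_infinity_on T f \<Longrightarrow> C_infinity_on T g \<Longrightarrow> sum_of_products_on T (\<lambda>x. f x * g x)"
| add: "sum_of_products_on T u \<Longrightarrow> sum_of_products_on T v \<Longrightarrow> sum_of_products_on T (\<lambda>x. u x + v x)"

lemma sum_of_products_on_deriv:
  assumes "sum_of_products_on T u"
  shows "(\<forall>x\<in>T. u differentiable (at x)) \<and> (\<exists>v. sum_of_products_on T v \<and> (\<forall>x\<in>T. deriv u x = v x))"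
  using assms
proof induction
  case (product f g)
  have "((\<lambda>x. f x * g x) has_field_derivative deriv f x * g x + f x * deriv g x) (at x)" if "x \<in> T" for x
    using DERIV_mult[OF C_infinity_on_has_field_derivative C_infinity_on_has_field_derivative] product that
    by (simp add: mult.commute)
  moreover have "sum_of_products_on T (\<lambda>x. deriv f x * g x + f x * deriv g x)"
    using product by (intro sum_of_products_on.intros C_infinity_on_deriv)
  ultimately show ?case
    using DERIV_imp_deriv real_differentiable_def by blast
next
  case (add u v)
  then obtain u' v' where u': "sum_of_products_on T u'" "\<forall>x\<in>T. deriv u x = u' x"
      and v': "sum_of_products_on T v'" "\<forall>x\<in>T. deriv v x = v' x" by blast
  have "((\<lambda>x. u x + v x) has_field_derivative u' x + v' x) (at x)" if x: "x \<in> T" for x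
  proof -
    have "(u has_field_derivative deriv u x) (at x)" "(v has_field_derivative deriv v x) (at x)"
      using add x by (simp_all add: DERIV_deriv_iff_real_differentiable)
    then show ?thesis using u'(2) v'(2) x by (simp add: DERIV_add)
  qed
  then show ?case
    using sum_of_products_on.add[OF u'(1) v'(1)] DERIV_imp_deriv real_differentiable_def by blast
qed

lemma sum_of_products_on_imp_C_infinity_on:
  "open T \<Longrightarrow> sum_of_products_on T u \<Longrightarrow> C_infinity_on T u"
  by (rule C_infinity_on_coinduct[where P="sum_of_products_on T"]) (use sum_of_products_on_deriv in blast)+

lemma C_infinity_on_mult:
  assumes "open T" "C_infinity_on T f" "C_infinity_on T g"
  shows "C_infinity_on T (\<lambda>x. f x * g x)"
  using assms by (blast intro: sum_of_products_on_imp_C_infinity_on sum_of_products_on.product)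

lemma C_infinity_on_add:
  assumes T: "open T" and "C_infinity_on T f" "C_infinity_on T g"
  shows "C_infinity_on T (\<lambda>x. f x + g x)"
proof -
  have "sum_of_products_on T (\<lambda>x. f x * 1 + g x * 1)"
    using assms C_infinity_on_const[OF T] by (intro sum_of_products_on.intros)
  then show ?thesis using sum_of_products_on_imp_C_infinity_on[OF T] by simp
qed

lemma C_infinity_on_cmult:
  "open T \<Longrightarrow> C_infinity_on T f \<Longrightarrow> C_infinity_on T (\<lambda>x. c * f x)"
  using C_infinity_on_mult C_infinity_on_const by blast

lemma C_infinity_on_diff:
  assumes "open T" "C_infinity_on T f" "C_infinity_on T g"
  shows "C_infinity_on T (\<lambda>x. f x - g x)"
  using C_infinity_on_add[OF assms(1,2) C_infinity_on_cmult[OF assms(1,3), of "-1"]] by simp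

lemma C_infinity_on_compose:
  assumes T: "open T" and T': "open T'" and FT: "\<forall>x\<in>T. F x \<in> T'"
    and FD: "\<forall>x\<in>T. (F has_field_derivative g (F x)) (at x)"
    and g: "C_infinity_on T' g" and a: "C_infinity_on T' a"
  shows "C_infinity_on T (\<lambda>x. a (F x))"
proof (rule C_infinity_on_coinduct[where P="\<lambda>u. \<exists>a. C_infinity_on T' a \<and> (\<forall>x\<in>T. u x = a (F x))", OF T])
  fix u assume "\<exists>a. C_infinity_on T' a \<and> (\<forall>x\<in>T. u x = a (F x))"
  then obtain c where c: "C_infinity_on T' c" "\<forall>x\<in>T. u x = c (F x)" by blast
  have D: "(u has_field_derivative (\<lambda>y. deriv c y * g y) (F x)) (at x)" if x: "x \<in> T" for x
  proof -
    have "((\<lambda>x. c (F x)) has_field_derivative deriv c (F x) * g (F x)) (at x)"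
      using DERIV_chain2[OF C_infinity_on_has_field_derivative[OF c(1)] FD[rule_format, OF x]] FT x
      by simp
    then show ?thesis
      by (rule has_field_derivative_transform_within_open[OF _ T x]) (use c(2) in auto)
  qed
  have "C_infinity_on T' (\<lambda>y. deriv c y * g y)"
    by (rule C_infinity_on_mult[OF T' C_infinity_on_deriv[OF c(1)] g])
  then show "(\<forall>x\<in>T. u differentiable (at x)) \<and>
     (\<exists>v. (\<exists>a. C_infinity_on T' a \<and> (\<forall>x\<in>T. v x = a (F x))) \<and> (\<forall>x\<in>T. deriv u x = v x))"
    using D DERIV_imp_deriv real_differentiable_def by blast
qed (use a in blast)

lemma C_infinity_on_shift:
  assumes "open T" "open T'" "\<forall>y\<in>T. c + y \<in> T'" "C_infinity_on T' a"
  shows "C_infinity_on T (\<lambda>y. a (c + y))"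
  by (rule C_infinity_on_compose[OF assms(1-3) _ C_infinity_on_const[OF assms(2), of 1] assms(4)])
     (auto intro!: derivative_eq_intros)

text \<open>The derivatives of 1/h are all of the form a/h^(n+1) with a C-infinity.\<close>
lemma C_infinity_on_inverse:
  assumes T: "open T" and h: "C_infinity_on T h" and nz: "\<forall>x\<in>T. h x \<noteq> 0"
  shows "C_infinity_on T (\<lambda>x. 1 / h x)"
proof (rule C_infinity_on_coinduct[where P="\<lambda>u. \<exists>a n. C_infinity_on T a \<and> (\<forall>x\<in>T. u x = a x / h x ^ Suc n)", OF T])
  fix u assume "\<exists>a n. C_infinity_on T a \<and> (\<forall>x\<in>T. u x = a x / h x ^ Suc n)"
  then obtain a n where a: "C_infinity_on T a" "\<forall>x\<in>T. u x = a x / h x ^ Suc n" by blast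
  define c where "c = (\<lambda>x. deriv a x * h x - of_nat (Suc n) * (a x * deriv h x))"
  have D: "(u has_field_derivative c x / h x ^ Suc (Suc n)) (at x)" if x: "x \<in> T" for x
  proof -
    have hx: "h x \<noteq> 0" using nz x by blast
    have "((\<lambda>x. a x / h x ^ Suc n) has_field_derivative
         (deriv a x * h x ^ Suc n - of_nat (Suc n) * (deriv h x * h x ^ n) * a x) / (h x ^ Suc n * h x ^ Suc n)) (at x)"
      using DERIV_quotient[OF C_infinity_on_has_field_derivative[OF a(1) x]
          DERIV_power[OF C_infinity_on_has_field_derivative[OF h x], of "Suc n"]] hx
      by simp
    moreover have "(deriv a x * h x ^ Suc n - of_nat (Suc n) * (deriv h x * h x ^ n) * a x) / (h x ^ Suc n * h x ^ Suc n)
       = c x / h x ^ Suc (Suc n)"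
      using hx unfolding c_def by (simp add: field_simps)
    ultimately have "((\<lambda>x. a x / h x ^ Suc n) has_field_derivative c x / h x ^ Suc (Suc n)) (at x)"
      by simp
    then show ?thesis
      by (rule has_field_derivative_transform_within_open[OF _ T x]) (use a(2) in auto)
  qed
  have "C_infinity_on T c" unfolding c_def
    by (intro C_infinity_on_diff C_infinity_on_mult C_infinity_on_cmult C_infinity_on_deriv a h T)
  then show "(\<forall>x\<in>T. u differentiable (at x)) \<and>
     (\<exists>g. (\<exists>a n. C_infinity_on T a \<and> (\<forall>x\<in>T. g x = a x / h x ^ Suc n)) \<and> (\<forall>x\<in>T. deriv u x = g x))"
    using D DERIV_imp_deriv real_differentiable_def by blast
next
  show "\<exists>a n. C_infinity_on T a \<and> (\<forall>x\<in>T. 1 / h x = a x / h x ^ Suc n)"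
    by (rule exI[of _ "\<lambda>_. 1"], rule exI[of _ 0]) (simp add: C_infinity_on_const T)
qed

lemma cusp_characteristic_positive_extension:
  assumes "cusp_characteristic R"
  obtains h b where "1 < b" "C_infinity_on {0<..<b} h" "\<forall>x\<in>{0<..<b}. 0 < h x"
    "\<forall>x\<in>{0<..1}. h x = R x"
proof -
  from assms obtain T h where T: "open T" "{0<..1} \<subseteq> T" and hR: "\<forall>x\<in>{0<..1}. h x = R x"
    and h: "C_infinity_on T h" and R_pos: "\<forall>t\<in>{0<..1}. 0 < R t"
    unfolding cusp_characteristic_def smooth_on_iff_C_infinity_on by blast
  have "isCont h 1"
    using T by (intro differentiable_imp_continuous_within C_infinity_on_imp_differentiable[OF h]) auto
  then have "(h \<longlongrightarrow> h 1) (nhds 1)" by (simp add: isCont_def tendsto_at_iff_tendsto_nhds)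
  moreover have "0 < h 1" using hR R_pos by auto
  ultimately have "eventually (\<lambda>y. 0 < h y) (nhds 1)" by (rule order_tendstoD(1))
  moreover have "eventually (\<lambda>y. y \<in> T) (nhds 1)" using T by (intro eventually_nhds_in_open) auto
  ultimately have "eventually (\<lambda>y. y \<in> T \<and> 0 < h y) (nhds 1)"
    by (rule eventually_conj[rotated])
  then obtain e where e: "0 < e" "\<forall>y. dist y 1 < e \<longrightarrow> y \<in> T \<and> 0 < h y"
    unfolding eventually_nhds_metric by blast
  define b where "b = 1 + e / 2"
  have "y \<in> T \<and> 0 < h y" if "y \<in> {0<..<b}" for y
    using that e T hR R_pos by (cases "y \<le> 1") (auto simp: b_def dist_real_def)
  then have "C_infinity_on {0<..<b} h" "\<forall>x\<in>{0<..<b}. 0 < h x"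
    using h unfolding C_infinity_on_def by blast+
  moreover have "1 < b" using e by (simp add: b_def)
  ultimately show thesis using that hR by blast
qed

lemma higher_deriv_const: "(deriv ^^ n) (\<lambda>_. c::real) x = (if n = 0 then c else 0)"
proof (cases n)
  case (Suc m)
  have "(deriv ^^ m) (\<lambda>_. 0::real) = (\<lambda>_. 0)" by (induction m) auto
  then show ?thesis using Suc by (simp only: funpow_Suc_right o_apply deriv_const) simp
qed simp

lemma higher_deriv_translation:
  "(deriv ^^ n) (\<lambda>y. y + c::real) x = (if n = 0 then x + c else if n = 1 then 1 else 0)"
proof (cases n)
  case (Suc m)
  have "deriv (\<lambda>y. y + c::real) = (\<lambda>_. 1)"
    by (rule ext, rule DERIV_imp_deriv) (auto intro!: derivative_eq_intros)
  then show ?thesis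
    using Suc higher_deriv_const[of m 1 x] by (simp only: funpow_Suc_right o_apply) simp
qed simp

lemma normalized_chart_image_subset:
  "normalized_chart M \<kappa> \<Longrightarrow> x \<in> std_cube (fst \<kappa>) \<Longrightarrow> snd \<kappa> x \<in> M"
  unfolding normalized_chart_def Let_def by (meson image_eqI in_mono openin_imp_subset)

lemma uniformly_regular_cong:
  assumes agree: "\<forall>x\<in>M. G x = G' x" and "uniformly_regular M G"
  shows "uniformly_regular M G'"
proof -
  have in_M: "snd \<kappa> y \<in> M" if "normalized_chart M \<kappa>" "y \<in> interior (std_cube (fst \<kappa>))" for \<kappa> y
    using that normalized_chart_image_subset interior_subset by blast
  have metric_eq: "G (snd \<kappa> x) = G' (snd \<kappa> x)"
    if "normalized_chart M \<kappa>" "x \<in> interior (std_cube (fst \<kappa>))" for \<kappa> x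
    using agree in_M[OF that] by blast
  have higher_deriv_eq: "(deriv ^^ k) (\<lambda>y. G (snd \<kappa> y) * (deriv (snd \<kappa>) y)\<^sup>2) x
       = (deriv ^^ k) (\<lambda>y. G' (snd \<kappa> y) * (deriv (snd \<kappa>) y)\<^sup>2) x"
    if "normalized_chart M \<kappa>" "x \<in> interior (std_cube (fst \<kappa>))" for \<kappa> x k
    by (rule higher_deriv_eq_on_open[OF open_interior _ that(2)]) (use agree in_M[OF that(1)] in auto)
  show ?thesis
    using assms(2) unfolding uniformly_regular_def
    by (rule ex_forward, elim conjE, intro conjI) (auto simp: metric_eq higher_deriv_eq)
qed

locale arclength_coordinate =
  fixes h :: "real \<Rightarrow> real" and b :: real
  assumes one_less_b: "1 < b"
    and C_infinity_h: "C_infinity_on {0<..<b} h"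
    and h_pos: "x \<in> {0<..<b} \<Longrightarrow> 0 < h x"
    and divergent: "set_nn_integral lborel {0<..1} (\<lambda>t. ennreal (1 / h t)) = \<infinity>"
begin

definition arclen :: "real \<Rightarrow> real" where
  "arclen x = (if x \<le> 1 then integral {x..1} (\<lambda>t. 1 / h t) else - integral {1..x} (\<lambda>t. 1 / h t))"

lemma continuous_on_inverse_h: "0 < a \<Longrightarrow> c < b \<Longrightarrow> continuous_on {a..c} (\<lambda>t. 1 / h t)"
  using h_pos C_infinity_on_imp_differentiable[OF C_infinity_h]
  by (intro continuous_at_imp_continuous_on ballI continuous_intros differentiable_imp_continuous_within)
     (auto simp: less_imp_neq[symmetric])

lemma arclen_has_derivative:
  assumes x: "x \<in> {0<..<b}"
  shows "(arclen has_real_derivative - (1 / h x)) (at x)"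
proof -
  define a where "a = min (x/2) (1/2)"
  define c where "c = (max x 1 + b) / 2"
  have a: "0 < a" "a < x" "a < 1" and c: "c < b" "x < c" "1 < c"
    using x one_less_b unfolding a_def c_def by auto
  have cont: "continuous_on {a..c} (\<lambda>t. 1 / h t)" using continuous_on_inverse_h a c by simp
  have int: "(\<lambda>t. 1 / h t) integrable_on {a..c}" by (rule integrable_continuous_real[OF cont])
  have eq: "arclen y = integral {a..1} (\<lambda>t. 1 / h t) - integral {a..y} (\<lambda>t. 1 / h t)"
    if y: "y \<in> {a<..<c}" for y
  proof (cases "y \<le> 1")
    case True
    have "integral {a..y} (\<lambda>t. 1 / h t) + integral {y..1} (\<lambda>t. 1 / h t) = integral {a..1} (\<lambda>t. 1 / h t)"
      by (intro Henstock_Kurzweil_Integration.integral_combine integrable_on_subinterval[OF int])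
         (use y True c in auto)
    then show ?thesis using True unfolding arclen_def by simp
  next
    case False
    have "integral {a..1} (\<lambda>t. 1 / h t) + integral {1..y} (\<lambda>t. 1 / h t) = integral {a..y} (\<lambda>t. 1 / h t)"
      by (intro Henstock_Kurzweil_Integration.integral_combine integrable_on_subinterval[OF int])
         (use y False a in auto)
    then show ?thesis using False unfolding arclen_def by simp
  qed
  have "((\<lambda>y. integral {a..y} (\<lambda>t. 1 / h t)) has_real_derivative 1 / h x) (at x within {a..c})"
    by (rule integral_has_real_derivative[OF cont]) (use a c in auto)
  moreover have "at x within {a..c} = at x"
    by (rule at_within_interior) (use a c in auto)
  ultimately have "((\<lambda>y. integral {a..1} (\<lambda>t. 1 / h t) - integral {a..y} (\<lambda>t. 1 / h t))
      has_real_derivative - (1 / h x)) (at x)"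
    by (auto intro!: derivative_eq_intros)
  then show ?thesis
    by (rule has_field_derivative_transform_within_open[where S="{a<..<c}"]) (use a c eq in auto)
qed

lemma isCont_arclen: "x \<in> {0<..<b} \<Longrightarrow> isCont arclen x"
  using arclen_has_derivative DERIV_isCont by blast

lemma arclen_strict_antimono: "0 < x \<Longrightarrow> x < y \<Longrightarrow> y < b \<Longrightarrow> arclen y < arclen x"
  by (rule DERIV_neg_imp_decreasing) (use arclen_has_derivative h_pos in force)+

lemma arclen_1 [simp]: "arclen 1 = 0"
  unfolding arclen_def by simp

lemma arclen_nonneg: "r \<in> {0<..1} \<Longrightarrow> 0 \<le> arclen r"
  using arclen_strict_antimono[of r 1] one_less_b by (cases "r = 1") auto

lemma inj_on_arclen: "inj_on arclen {0<..<b}"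
  by (rule linorder_inj_onI') (use arclen_strict_antimono in force)

text \<open>The point r = 0 is at infinite distance: this is where the divergence of the integral
  of 1/h enters.\<close>
lemma arclen_unbounded: "\<exists>r\<in>{0<..1}. B < arclen r"
proof (rule ccontr)
  assume "\<not> ?thesis"
  then have bounded: "arclen r \<le> B" if "r \<in> {0<..1}" for r using that by (auto simp: not_less)
  define a where "a n = 1 / real (Suc n)" for n
  have a: "0 < a n" "a n \<le> 1" for n by (auto simp: a_def)
  define g where "g n x = ennreal (indicator {a n..1} x * (1 / h x))" for n x
  have integral_g: "integral\<^sup>N lborel (g n) = ennreal (arclen (a n))" for n
  proof -
    have "((\<lambda>t. 1 / h t) has_integral arclen (a n)) {a n..1}"
      using a[of n] one_less_b
      by (auto simp: arclen_def intro!: integrable_integral integrable_continuous_real continuous_on_inverse_h)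
    then show ?thesis
      unfolding g_def using a[of n] h_pos one_less_b
      by (intro nn_integral_has_integral_lebesgue) (auto simp: less_imp_le)
  qed
  have incseq: "incseq g"
  proof (intro incseq_SucI le_funI)
    fix n x
    show "g n x \<le> g (Suc n) x"
    proof (cases "x \<in> {a n..1}")
      case True
      moreover have "a (Suc n) \<le> a n" by (simp add: a_def frac_le)
      ultimately show ?thesis by (simp add: g_def)
    qed (simp add: g_def)
  qed
  have measurable: "g n \<in> borel_measurable lborel" for n
  proof -
    have "(\<lambda>x. indicator {a n..1} x *\<^sub>R (1 / h x)) \<in> borel_measurable borel"
      using a[of n] one_less_b
      by (intro borel_measurable_continuous_on_indicator continuous_on_inverse_h) auto
    then show ?thesis unfolding g_def by simp
  qed
  have below_SUP: "ennreal (1 / h x) * indicator {0<..1} x \<le> (SUP n. g n x)" for x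
  proof (cases "x \<in> {0<..1}")
    case True
    then obtain n where "inverse (real (Suc n)) < x" using reals_Archimedean by auto
    then have "ennreal (1 / h x) * indicator {0<..1} x = g n x"
      using True by (simp add: g_def a_def indicator_def field_simps)
    then show ?thesis by (metis SUP_upper UNIV_I)
  qed simp
  have "set_nn_integral lborel {0<..1} (\<lambda>t. ennreal (1 / h t)) \<le> (\<integral>\<^sup>+x. (SUP n. g n x) \<partial>lborel)"
    using below_SUP by (rule nn_integral_mono)
  also have "\<dots> = (SUP n. integral\<^sup>N lborel (g n))"
    by (rule nn_integral_monotone_convergence_SUP[OF incseq measurable])
  also have "\<dots> \<le> ennreal B"
    using integral_g bounded a by (intro SUP_least) (simp add: ennreal_leI)
  finally show False
    using divergent by (simp add: top_unique)
qed

text \<open>Extending h beyond r = 1 makes arclen_inv smooth on a neighbourhood of [0, \<infinity>),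
  as the boundary chart requires.\<close>
definition r1 :: real where "r1 = (1 + b) / 2"

lemma r1_bounds: "1 < r1" "r1 < b"
  unfolding r1_def using one_less_b by auto

lemma arclen_r1_neg: "arclen r1 < 0"
  using arclen_strict_antimono[of 1 r1] r1_bounds by simp

lemma arclen_surj:
  assumes y: "arclen r1 < y"
  shows "\<exists>r\<in>{0<..<r1}. arclen r = y"
proof (cases "0 \<le> y")
  case True
  obtain r0 where r0: "r0 \<in> {0<..1}" "y < arclen r0" using arclen_unbounded by blast
  have "continuous_on {r0..1} arclen"
    using r0 one_less_b by (intro continuous_at_imp_continuous_on ballI isCont_arclen) auto
  then obtain r where "r0 \<le> r" "r \<le> 1" "arclen r = y"
    using IVT2'[of arclen 1 y r0] r0 True by auto
  then show ?thesis using r0 r1_bounds by (intro bexI[of _ r]) auto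
next
  case False
  have "continuous_on {1..r1} arclen"
    using r1_bounds by (intro continuous_at_imp_continuous_on ballI isCont_arclen) auto
  then obtain r where "1 \<le> r" "r \<le> r1" "arclen r = y"
    using IVT2'[of arclen r1 y 1] y False r1_bounds by auto
  moreover have "r \<noteq> r1" using y \<open>arclen r = y\<close> by auto
  ultimately show ?thesis by (intro bexI[of _ r]) auto
qed

definition arclen_inv :: "real \<Rightarrow> real" where "arclen_inv = inv_into {0<..<b} arclen"

lemma arclen_inv_arclen: "r \<in> {0<..<b} \<Longrightarrow> arclen_inv (arclen r) = r"
  unfolding arclen_inv_def by (rule inv_into_f_f[OF inj_on_arclen])

lemma
  assumes "arclen r1 < y"
  shows arclen_inv_mem: "arclen_inv y \<in> {0<..<b}" and arclen_arclen_inv: "arclen (arclen_inv y) = y"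
proof -
  obtain r where "r \<in> {0<..<r1}" "arclen r = y" using arclen_surj[OF assms] by blast
  moreover have "r \<in> {0<..<b}" using calculation r1_bounds by auto
  ultimately show "arclen_inv y \<in> {0<..<b}" "arclen (arclen_inv y) = y"
    using arclen_inv_arclen by auto
qed

lemma arclen_inv_0 [simp]: "arclen_inv 0 = 1"
  using arclen_inv_arclen[of 1] one_less_b by simp

lemma arclen_inv_nonneg_mem: "0 \<le> y \<Longrightarrow> arclen_inv y \<in> {0<..1}"
  using arclen_inv_mem[of y] arclen_arclen_inv[of y] arclen_r1_neg arclen_strict_antimono[of 1 "arclen_inv y"]
  by fastforce

lemma arclen_inv_has_derivative:
  assumes y: "arclen r1 < y"
  shows "(arclen_inv has_real_derivative - h (arclen_inv y)) (at y)"
proof -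
  define x where "x = arclen_inv y"
  have x: "x \<in> {0<..<b}" and arclen_x: "arclen x = y"
    unfolding x_def using arclen_inv_mem[OF y] arclen_arclen_inv[OF y] by auto
  define d where "d = min x (b - x) / 2"
  have d: "0 < d" "d \<le> x / 2" "d \<le> (b - x) / 2"
    using x unfolding d_def by auto
  then have near: "z \<in> {0<..<b}" if "\<bar>z - x\<bar> \<le> d" for z
    using that by (auto simp: abs_le_iff)
  have "isCont arclen_inv y"
    using isCont_inverse_function[where f=arclen and g=arclen_inv, OF d(1)] near arclen_inv_arclen isCont_arclen arclen_x
    by blast
  moreover have "(arclen has_real_derivative - (1 / h x)) (at (arclen_inv y))"
    using arclen_has_derivative[OF x] unfolding x_def .
  moreover have "- (1 / h x) \<noteq> 0" using h_pos[OF x] by simp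
  ultimately have "(arclen_inv has_real_derivative inverse (- (1 / h x))) (at y)"
    using arclen_arclen_inv y
    by (intro DERIV_inverse_function[where a="arclen r1" and b="y + 1"]) auto
  then show ?thesis
    using h_pos[OF x] by (simp add: x_def)
qed

lemma C_infinity_arclen: "C_infinity_on {0<..<b} arclen"
proof (rule C_infinity_on_from_deriv)
  show "\<forall>x\<in>{0<..<b}. (arclen has_real_derivative (-1) * (1 / h x)) (at x)"
    using arclen_has_derivative by simp
  show "C_infinity_on {0<..<b} (\<lambda>x. (-1) * (1 / h x))"
    using h_pos less_irrefl by (intro C_infinity_on_cmult C_infinity_on_inverse C_infinity_h) force+
qed simp

text \<open>The inverse solves the ODE r' = -h(r), whose right-hand side is smooth in r.\<close>
lemma C_infinity_arclen_inv: "C_infinity_on {arclen r1<..} arclen_inv"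
proof (rule C_infinity_on_from_deriv)
  have neg_h: "C_infinity_on {0<..<b} (\<lambda>r. (-1) * h r)"
    by (rule C_infinity_on_cmult[OF _ C_infinity_h]) simp
  have "C_infinity_on {arclen r1<..} (\<lambda>y. h (arclen_inv y))"
    by (rule C_infinity_on_compose[OF _ _ _ _ neg_h C_infinity_h])
       (use arclen_inv_mem arclen_inv_has_derivative in auto)
  then show "C_infinity_on {arclen r1<..} (\<lambda>y. (-1) * h (arclen_inv y))"
    by (intro C_infinity_on_cmult) auto
  show "\<forall>y\<in>{arclen r1<..}. (arclen_inv has_real_derivative (-1) * h (arclen_inv y)) (at y)"
    using arclen_inv_has_derivative by simp
qed simp

definition chart_map :: "nat \<Rightarrow> real \<Rightarrow> real" where "chart_map k y = arclen_inv (real k + y)"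

text \<open>Chart k covers arclengths in (k - 1, k + 1); chart 0 is the boundary chart at r = 1.\<close>
definition chart :: "nat \<Rightarrow> bool \<times> (real \<Rightarrow> real)" where "chart k = (k = 0, chart_map k)"

lemma mem_std_cube_iff: "y \<in> std_cube (k = 0) \<longleftrightarrow> (if k = 0 then 0 \<le> y else -1 < y) \<and> y < 1"
  by (simp add: std_cube_def)

lemma std_cube_shift_nonneg: "y \<in> std_cube (k = 0) \<Longrightarrow> 0 \<le> real k + y"
  unfolding mem_std_cube_iff by (cases "k = 0") auto

lemma arclen_chart_map: "y \<in> std_cube (k = 0) \<Longrightarrow> arclen (chart_map k y) = real k + y"
  unfolding chart_map_def using std_cube_shift_nonneg arclen_r1_neg by (intro arclen_arclen_inv) force

lemma chart_map_mem: "y \<in> std_cube (k = 0) \<Longrightarrow> chart_map k y \<in> {0<..1}"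
  unfolding chart_map_def using std_cube_shift_nonneg by (intro arclen_inv_nonneg_mem)

lemma patch_chart: "patch (chart k) = chart_map k ` std_cube (k = 0)"
  by (simp add: patch_def chart_def)

lemma mem_patch_chart:
  "r \<in> patch (chart k) \<longleftrightarrow> r \<in> {0<..1} \<and> arclen r - real k \<in> std_cube (k = 0)"
proof
  assume "r \<in> patch (chart k)"
  then obtain y where "y \<in> std_cube (k = 0)" "r = chart_map k y"
    unfolding patch_chart by blast
  then show "r \<in> {0<..1} \<and> arclen r - real k \<in> std_cube (k = 0)"
    using chart_map_mem arclen_chart_map by auto
next
  assume r: "r \<in> {0<..1} \<and> arclen r - real k \<in> std_cube (k = 0)"
  then have "chart_map k (arclen r - real k) = r"
    unfolding chart_map_def using arclen_inv_arclen one_less_b by simp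
  then show "r \<in> patch (chart k)" unfolding patch_chart using r by force
qed

lemma inj_on_chart_map: "inj_on (chart_map k) (std_cube (k = 0))"
  by (rule inj_onI) (metis arclen_chart_map add_left_cancel)

lemma inv_chart_map:
  "r \<in> patch (chart k) \<Longrightarrow> inv_into (std_cube (k = 0)) (chart_map k) r = arclen r - real k"
  unfolding patch_chart using inj_on_chart_map arclen_chart_map by auto

lemma openin_patch_chart: "openin (top_of_set {0<..1}) (patch (chart k))"
proof -
  define W where "W = (if k = 0 then {..<1} else {-1<..<(1::real)})"
  have "continuous_on {0<..1} (\<lambda>r. arclen r - real k)"
    using one_less_b by (intro continuous_at_imp_continuous_on ballI continuous_intros isCont_arclen) auto
  then have "openin (top_of_set {0<..1}) ({0<..1} \<inter> (\<lambda>r. arclen r - real k) -` W)"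
    by (rule continuous_openin_preimage_gen) (simp add: W_def)
  moreover have "{0<..1} \<inter> (\<lambda>r. arclen r - real k) -` W = patch (chart k)"
    using arclen_nonneg by (auto simp: mem_patch_chart std_cube_def W_def split: if_splits)
  ultimately show ?thesis by simp
qed

lemma smooth_chart_map: "smooth_on (std_cube (k = 0)) (chart_map k)"
  unfolding smooth_on_iff_C_infinity_on
proof (intro exI conjI)
  show "std_cube (k = 0) \<subseteq> {arclen r1 - real k<..}"
    using std_cube_shift_nonneg arclen_r1_neg by force
  show "C_infinity_on {arclen r1 - real k<..} (chart_map k)"
    unfolding chart_map_def[abs_def] by (rule C_infinity_on_shift[OF _ _ _ C_infinity_arclen_inv]) auto
qed auto

lemma smooth_chart_inverse:
  "smooth_on (patch (chart k)) (inv_into (std_cube (k = 0)) (chart_map k))"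
  unfolding smooth_on_iff_C_infinity_on
proof (intro exI conjI)
  show "patch (chart k) \<subseteq> {0<..<b}"
    using mem_patch_chart one_less_b by fastforce
  show "\<forall>r\<in>patch (chart k). arclen r - real k = inv_into (std_cube (k = 0)) (chart_map k) r"
    using inv_chart_map by simp
  show "C_infinity_on {0<..<b} (\<lambda>r. arclen r - real k)"
    by (rule C_infinity_on_diff[OF _ C_infinity_arclen C_infinity_on_const]) auto
qed simp

lemma chart_map_eq_1_iff: "y \<in> std_cube (k = 0) \<Longrightarrow> chart_map k y = 1 \<longleftrightarrow> k = 0 \<and> y = 0"
  using arclen_chart_map[of y k] unfolding mem_std_cube_iff
  by (cases "k = 0") (auto simp: chart_map_def)

lemma normalized_chart_chart: "normalized_chart {0<..1} (chart k)"
proof -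
  have "mbd {0<..1::real} = {1}"
    by (auto simp: mbd_def)
  moreover have "0 \<in> std_cube True"
    by (simp add: std_cube_def)
  ultimately show ?thesis
    using openin_patch_chart[of k] inj_on_chart_map smooth_chart_map smooth_chart_inverse
      chart_map_eq_1_iff
    unfolding normalized_chart_def Let_def patch_chart
    by (auto simp: chart_def image_iff)
qed

lemma interior_std_cube: "interior (std_cube (k = 0)) = {(if k = 0 then 0 else -1)<..<1}"
  by (simp add: std_cube_def)

lemma pullback_metric_chart:
  assumes y: "y \<in> interior (std_cube (k = 0))"
  shows "1 / (h (chart_map k y))\<^sup>2 * (deriv (chart_map k) y)\<^sup>2 = 1"
proof -
  have "arclen r1 < real k + y"
    using y arclen_r1_neg unfolding interior_std_cube by (cases "k = 0") auto
  then have "((\<lambda>y. arclen_inv (real k + y)) has_real_derivative - h (chart_map k y) * 1) (at y)"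
    unfolding chart_map_def
    by (intro DERIV_chain2[OF arclen_inv_has_derivative]) (auto intro!: derivative_eq_intros)
  then have "deriv (chart_map k) y = - h (chart_map k y)"
    unfolding chart_map_def[abs_def] by (simp add: DERIV_imp_deriv)
  moreover have "chart_map k y \<in> {0<..1}"
    using y interior_subset by (blast intro: chart_map_mem)
  then have "h (chart_map k y) > 0"
    using one_less_b by (intro h_pos) auto
  ultimately show ?thesis by (simp add: power2_eq_square)
qed

lemma charts_cover: "{0<..1} \<subseteq> (\<Union>k. chart_map k ` shrunk_cube (3/4) (k = 0))"
proof
  fix r :: real assume r: "r \<in> {0<..1}"
  define s where "s = arclen r"
  define k where "k = nat \<lfloor>s + 1/2\<rfloor>"
  have s: "0 \<le> s" and "chart_map k (s - real k) = r"
    unfolding s_def chart_map_def using arclen_nonneg arclen_inv_arclen r one_less_b by auto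
  moreover have "s - real k \<in> shrunk_cube (3/4) (k = 0)"
  proof -
    have "real_of_int \<lfloor>s + 1/2\<rfloor> \<le> s + 1/2" "s + 1/2 < real_of_int \<lfloor>s + 1/2\<rfloor> + 1"
      by linarith+
    moreover have "real k = real_of_int \<lfloor>s + 1/2\<rfloor>"
      using s unfolding k_def by simp
    ultimately show ?thesis
      using s unfolding shrunk_cube_def by (simp; linarith)
  qed
  ultimately show "r \<in> (\<Union>k. chart_map k ` shrunk_cube (3/4) (k = 0))" by force
qed

lemma charts_multiplicity:
  assumes r: "r \<in> {0<..1}"
  shows "finite {\<kappa> \<in> range chart. r \<in> patch \<kappa>} \<and> card {\<kappa> \<in> range chart. r \<in> patch \<kappa>} \<le> 2"
proof -
  let ?K = "chart ` {nat \<lfloor>arclen r\<rfloor>, nat \<lfloor>arclen r\<rfloor> + 1}"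
  have sub: "{\<kappa> \<in> range chart. r \<in> patch \<kappa>} \<subseteq> ?K"
  proof
    fix \<kappa> assume "\<kappa> \<in> {\<kappa> \<in> range chart. r \<in> patch \<kappa>}"
    then obtain k where k: "\<kappa> = chart k" "r \<in> patch (chart k)" by auto
    then have "arclen r - 1 < real k" "real k \<le> arclen r + 1"
      unfolding mem_patch_chart mem_std_cube_iff by (auto split: if_splits)
    then have "k = nat \<lfloor>arclen r\<rfloor> \<or> k = nat \<lfloor>arclen r\<rfloor> + 1"
      using arclen_nonneg[OF r] by linarith
    then show "\<kappa> \<in> ?K" using k by auto
  qed
  have fin: "finite ?K" by simp
  have card: "card ?K \<le> 2"
    by (rule order_trans[OF card_image_le]) auto
  show ?thesis
    using finite_subset[OF sub fin] le_trans[OF card_mono[OF fin sub] card] by blast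
qed

lemma transition_chart:
  assumes "y \<in> std_cube (k = 0)" "chart_map k y \<in> patch (chart j)"
  shows "(inv_into (std_cube (j = 0)) (chart_map j) \<circ> chart_map k) y = y + (real k - real j)"
    and "y + (real k - real j) \<in> std_cube (j = 0)"
  using assms inv_chart_map[of "chart_map k y" j] arclen_chart_map[of y k] mem_patch_chart
  by (auto simp: algebra_simps)

lemma higher_deriv_transition_chart_bounded:
  assumes x: "x \<in> interior {y \<in> std_cube (k = 0). chart_map k y \<in> patch (chart j)}"
  shows "\<bar>(deriv ^^ n) (inv_into (std_cube (j = 0)) (chart_map j) \<circ> chart_map k) x\<bar> \<le> 1"
proof -
  have transition: "(deriv ^^ n) (inv_into (std_cube (j = 0)) (chart_map j) \<circ> chart_map k) x
      = (deriv ^^ n) (\<lambda>y. y + (real k - real j)) x"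
    by (rule higher_deriv_eq_on_open[OF open_interior _ x]) (use transition_chart(1) interior_subset in blast)
  have "x + (real k - real j) \<in> std_cube (j = 0)"
    using x interior_subset transition_chart(2) by blast
  then have "\<bar>x + (real k - real j)\<bar> \<le> 1"
    unfolding mem_std_cube_iff by (auto split: if_splits)
  then show ?thesis
    unfolding transition higher_deriv_translation by simp
qed

lemma higher_deriv_pullback_metric_chart:
  assumes x: "x \<in> interior (std_cube (k = 0))"
  shows "(deriv ^^ n) (\<lambda>y. 1 / (h (chart_map k y))\<^sup>2 * (deriv (chart_map k) y)\<^sup>2) x = (if n = 0 then 1 else 0)"
proof -
  have "(deriv ^^ n) (\<lambda>y. 1 / (h (chart_map k y))\<^sup>2 * (deriv (chart_map k) y)\<^sup>2) x = (deriv ^^ n) (\<lambda>_. 1) x"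
    by (rule higher_deriv_eq_on_open[OF open_interior _ x]) (use pullback_metric_chart in blast)
  then show ?thesis by (simp add: higher_deriv_const)
qed

lemma uniformly_regular_arclength_charts: "uniformly_regular {0<..1} (\<lambda>r. 1 / (h r)\<^sup>2)"
  unfolding uniformly_regular_def
proof (intro exI[of _ "range chart"] conjI)
  show "\<forall>\<kappa>\<in>range chart. normalized_chart {0<..1} \<kappa>"
    using normalized_chart_chart by blast
  show "\<exists>r>0. r < 1 \<and> {0<..1} \<subseteq> (\<Union>\<kappa>\<in>range chart. snd \<kappa> ` shrunk_cube r (fst \<kappa>))"
    using charts_cover by (intro exI[of _ "3/4"]) (auto simp: chart_def)
  show "\<exists>N. \<forall>r\<in>{0<..1}. finite {\<kappa> \<in> range chart. r \<in> patch \<kappa>} \<and> card {\<kappa> \<in> range chart. r \<in> patch \<kappa>} \<le> N"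
    using charts_multiplicity by blast
  show "\<forall>n. \<exists>C. \<forall>\<kappa>\<in>range chart. \<forall>\<eta>\<in>range chart.
           \<forall>x\<in>interior {y \<in> std_cube (fst \<kappa>). snd \<kappa> y \<in> patch \<eta>}.
             \<bar>(deriv ^^ n) (inv_into (std_cube (fst \<eta>)) (snd \<eta>) \<circ> snd \<kappa>) x\<bar> \<le> C"
  proof (intro allI exI[of _ 1] ballI)
    fix n \<kappa> \<eta> x
    assume "\<kappa> \<in> range chart" "\<eta> \<in> range chart"
      and x: "x \<in> interior {y \<in> std_cube (fst \<kappa>). snd \<kappa> y \<in> patch \<eta>}"
    then obtain k j where "\<kappa> = chart k" "\<eta> = chart j" by blast
    then show "\<bar>(deriv ^^ n) (inv_into (std_cube (fst \<eta>)) (snd \<eta>) \<circ> snd \<kappa>) x\<bar> \<le> 1"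
      using x higher_deriv_transition_chart_bounded[of x k j n] by (simp add: chart_def)
  qed
  show "\<exists>c\<ge>1. \<forall>\<kappa>\<in>range chart. \<forall>x\<in>interior (std_cube (fst \<kappa>)).
          1 / c \<le> 1 / (h (snd \<kappa> x))\<^sup>2 * (deriv (snd \<kappa>) x)\<^sup>2 \<and>
          1 / (h (snd \<kappa> x))\<^sup>2 * (deriv (snd \<kappa>) x)\<^sup>2 \<le> c"
  proof (intro exI[of _ 1] conjI ballI)
    fix \<kappa> x assume "\<kappa> \<in> range chart" and x: "x \<in> interior (std_cube (fst \<kappa>))"
    then obtain k where k: "\<kappa> = chart k" by blast
    have one: "1 / (h (snd \<kappa> x))\<^sup>2 * (deriv (snd \<kappa>) x)\<^sup>2 = 1"
      using x unfolding k chart_def fst_conv snd_conv by (rule pullback_metric_chart)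
    show "1 / 1 \<le> 1 / (h (snd \<kappa> x))\<^sup>2 * (deriv (snd \<kappa>) x)\<^sup>2"
      unfolding one by simp
    show "1 / (h (snd \<kappa> x))\<^sup>2 * (deriv (snd \<kappa>) x)\<^sup>2 \<le> 1"
      unfolding one by simp
  qed simp
  show "\<forall>n. \<exists>C. \<forall>\<kappa>\<in>range chart. \<forall>x\<in>interior (std_cube (fst \<kappa>)).
          \<bar>(deriv ^^ n) (\<lambda>y. 1 / (h (snd \<kappa> y))\<^sup>2 * (deriv (snd \<kappa>) y)\<^sup>2) x\<bar> \<le> C"
    using higher_deriv_pullback_metric_chart by (auto simp: chart_def)
qed

end

theorem proposition8p2:
  fixes R :: "real \<Rightarrow> real"
  assumes "cusp_characteristic R"
  shows "uniformly_regular {0<..1} (\<lambda>r. 1 / (R r)\<^sup>2)"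
proof -
  obtain h b where "1 < b" "C_infinity_on {0<..<b} h" "\<forall>x\<in>{0<..<b}. 0 < h x"
    and hR: "\<forall>x\<in>{0<..1}. h x = R x"
    using cusp_characteristic_positive_extension[OF assms] .
  moreover have "set_nn_integral lborel {0<..1} (\<lambda>t. ennreal (1 / h t)) = \<infinity>"
  proof -
    have "set_nn_integral lborel {0<..1} (\<lambda>t. ennreal (1 / h t))
        = set_nn_integral lborel {0<..1} (\<lambda>t. ennreal (1 / R t))"
      by (intro nn_integral_cong) (simp add: hR indicator_def)
    then show ?thesis using assms unfolding cusp_characteristic_def by simp
  qed
  ultimately interpret arclength_coordinate h b
    by unfold_locales auto
  show ?thesis
    by (rule uniformly_regular_cong[OF _ uniformly_regular_arclength_charts]) (simp add: hR)
qed

end
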